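(* Under the standing assumptions, let $v$ be a vertex of degree $7$ in $G$. If there is a vertex $u$ of degree $3$ such that the edge $vu$ lies on a $3$-face, then there is no other vertex $w\neq u$ of degree $3$ such that the edge $vw$ lies on a $3$-face.
   Context: Standing assumptions: A total $9$-coloring of a graph is an assignment of colors from $\{1,\dots,9\}$ to the vertices and edges such that adjacent vertices, edges sharing an endpoint, and a vertex and an incident edge receive different colors. A $4$-fan is the graph on six vertices $c,u_1,\dots,u_5$ with edges $cu_j$ ($1\le j\le5$) and $u_ju_{j+1}$ ($1\le j\le4$). $G$ is a minimal counterexample: $G$ is a simple planar graph with maximum degree $8$, containing no subgraph isomorphic to a $4$-fan, that has no total $9$-coloring, and such that every simple planar graph $H$ with maximum degree at most $8$, no subgraph isomorphic to a $4$-fan, and $|V(H)|+|E(H)|<|V(G)|+|E(G)|$ has a total $9$-coloring. $G$ is considered with a fixed plane embedding; a $3$-face is a face of length $3$. *)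

theory Defs
  imports "HOL-Analysis.Analysis"
begin

definition simple_graph :: "'a set \<Rightarrow> 'a set set \<Rightarrow> bool" where
  "simple_graph V E \<longleftrightarrow> finite V \<and>
     (\<forall>e\<in>E. \<exists>x y. e = {x, y} \<and> x \<noteq> y \<and> x \<in> V \<and> y \<in> V)"

definition deg :: "'a set set \<Rightarrow> 'a \<Rightarrow> nat" where
  "deg E v = card {e \<in> E. v \<in> e}"

definition max_degree :: "'a set \<Rightarrow> 'a set set \<Rightarrow> nat" where
  "max_degree V E = Max (deg E ` V)"

definition has_4fan :: "'a set \<Rightarrow> 'a set set \<Rightarrow> bool" where
  "has_4fan V E \<longleftrightarrow> (\<exists>c u. c \<in> V \<and> inj_on u {1..5::nat} \<and> u ` {1..5} \<subseteq> V \<and>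
      c \<notin> u ` {1..5} \<and>
      (\<forall>j\<in>{1..5}. {c, u j} \<in> E) \<and> (\<forall>j\<in>{1..4}. {u j, u (Suc j)} \<in> E))"

definition total_coloring :: "nat \<Rightarrow> 'a set \<Rightarrow> 'a set set \<Rightarrow> ('a \<Rightarrow> nat) \<Rightarrow> ('a set \<Rightarrow> nat) \<Rightarrow> bool" where
  "total_coloring k V E cv ce \<longleftrightarrow>
     (\<forall>v\<in>V. cv v \<in> {1..k}) \<and> (\<forall>e\<in>E. ce e \<in> {1..k}) \<and>
     (\<forall>x y. {x, y} \<in> E \<longrightarrow> x \<noteq> y \<longrightarrow> cv x \<noteq> cv y) \<and>
     (\<forall>e1\<in>E. \<forall>e2\<in>E. e1 \<noteq> e2 \<and> e1 \<inter> e2 \<noteq> {} \<longrightarrow> ce e1 \<noteq> ce e2) \<and>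
     (\<forall>e\<in>E. \<forall>v\<in>e. cv v \<noteq> ce e)"

definition total_colorable :: "nat \<Rightarrow> 'a set \<Rightarrow> 'a set set \<Rightarrow> bool" where
  "total_colorable k V E \<longleftrightarrow> (\<exists>cv ce. total_coloring k V E cv ce)"

definition plane_embedding ::
  "'a set \<Rightarrow> 'a set set \<Rightarrow> ('a \<Rightarrow> complex) \<Rightarrow> ('a set \<Rightarrow> real \<Rightarrow> complex) \<Rightarrow> bool" where
  "plane_embedding V E p \<gamma> \<longleftrightarrow>
     inj_on p V \<and>
     (\<forall>e\<in>E. arc (\<gamma> e) \<and> {pathstart (\<gamma> e), pathfinish (\<gamma> e)} = p ` e) \<and>
     (\<forall>e\<in>E. \<forall>v\<in>V. p v \<in> path_image (\<gamma> e) \<longrightarrow> v \<in> e) \<and>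
     (\<forall>e1\<in>E. \<forall>e2\<in>E. e1 \<noteq> e2 \<longrightarrow>
        path_image (\<gamma> e1) \<inter> path_image (\<gamma> e2) \<subseteq> p ` (e1 \<inter> e2))"

definition planar :: "'a set \<Rightarrow> 'a set set \<Rightarrow> bool" where
  "planar V E \<longleftrightarrow> (\<exists>p \<gamma>. plane_embedding V E p \<gamma>)"

definition drawing :: "'a set \<Rightarrow> 'a set set \<Rightarrow> ('a \<Rightarrow> complex) \<Rightarrow> ('a set \<Rightarrow> real \<Rightarrow> complex) \<Rightarrow> complex set" where
  "drawing V E p \<gamma> = p ` V \<union> (\<Union>e\<in>E. path_image (\<gamma> e))"

definition faces :: "'a set \<Rightarrow> 'a set set \<Rightarrow> ('a \<Rightarrow> complex) \<Rightarrow> ('a set \<Rightarrow> real \<Rightarrow> complex) \<Rightarrow> complex set set" where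
  "faces V E p \<gamma> = components (- drawing V E p \<gamma>)"

text \<open>The edge ab lies on a 3-face: some face is bounded by a triangle abc,
  i.e. its topological boundary is exactly the drawing of the triangle abc
  (for a simple plane graph, the faces of length 3 are exactly these).\<close>
definition edge_on_3face ::
  "'a set \<Rightarrow> 'a set set \<Rightarrow> ('a \<Rightarrow> complex) \<Rightarrow> ('a set \<Rightarrow> real \<Rightarrow> complex) \<Rightarrow> 'a \<Rightarrow> 'a \<Rightarrow> bool" where
  "edge_on_3face V E p \<gamma> a b \<longleftrightarrow>
     (\<exists>F c. F \<in> faces V E p \<gamma> \<and> a \<noteq> b \<and> c \<noteq> a \<and> c \<noteq> b \<and>
        {a, b} \<in> E \<and> {b, c} \<in> E \<and> {a, c} \<in> E \<and>
        frontier F = path_image (\<gamma> {a, b}) \<union> path_image (\<gamma> {b, c}) \<union> path_image (\<gamma> {a, c}))"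

end

(*
  Delete the edge vu: by minimality G - vu has a total 9-coloring. Uncolor u and w; a vertex of
  degree 3 sees at most 6 colors, so both can be colored again at the very end, and it remains
  to color vu. The edge vu sees at most 7 colors at v (that of v and of its six other edges) and
  2 at u. If no color is free, these two sets are disjoint and cover all nine colors. If some
  color g on an edge at u does not occur on the two other edges at w, recolor vw with g and give
  vu the old color of vw. Otherwise w sees exactly the colors seen at u; with x the third vertex
  of the triangle vux, exchange the colors of ux and vx, give vw the old color of vx and vu the
  old color of vw. If uw is an edge, it is simpler to delete uw instead of vu.
*)
theory Submission
  imports Defs
begin

lemma simple_graph_edge_subset: "simple_graph V E \<Longrightarrow> e \<in> E \<Longrightarrow> e \<subseteq> V"
  unfolding simple_graph_def by fastforce

lemma simple_graph_finite_edges: "simple_graph V E \<Longrightarrow> finite E"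
proof -
  assume G: "simple_graph V E"
  then have "E \<subseteq> Pow V" using simple_graph_edge_subset by blast
  moreover have "finite V" using G unfolding simple_graph_def by simp
  ultimately show "finite E" by (rule finite_subset[OF _ finite_Pow_iff[THEN iffD2]])
qed

lemma simple_graph_Diff: "simple_graph V E \<Longrightarrow> simple_graph V (E - F)"
  unfolding simple_graph_def by simp

lemma plane_embedding_Diff: "plane_embedding V E p \<gamma> \<Longrightarrow> plane_embedding V (E - F) p \<gamma>"
  unfolding plane_embedding_def by simp

lemma deg_le_max_degree: "finite V \<Longrightarrow> a \<in> V \<Longrightarrow> deg E a \<le> max_degree V E"
  unfolding max_degree_def by (rule Max_ge) auto

lemma deg_Diff_le: "finite E \<Longrightarrow> deg (E - F) a \<le> deg E a"
  unfolding deg_def by (rule card_mono) auto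

lemma deg_Diff_incident:
  "finite E \<Longrightarrow> e0 \<in> E \<Longrightarrow> a \<in> e0 \<Longrightarrow> deg (E - {e0}) a = deg E a - 1"
proof -
  assume "finite E" "e0 \<in> E" "a \<in> e0"
  then have "{e \<in> E - {e0}. a \<in> e} = {e \<in> E. a \<in> e} - {e0}" by blast
  then show ?thesis unfolding deg_def using \<open>finite E\<close> \<open>e0 \<in> E\<close> \<open>a \<in> e0\<close> by simp
qed


section \<open>Relabeling vertices\<close>

lemma has_4fan_hom:
  assumes "has_4fan V' E'" "inj_on g V'" "g ` V' \<subseteq> V"
    and edges: "\<And>a b. {a, b} \<in> E' \<Longrightarrow> {g a, g b} \<in> E"
  shows "has_4fan V E"
proof -
  obtain c u where fan: "c \<in> V'" "inj_on u {1..5}" "u ` {1..5} \<subseteq> V'" "c \<notin> u ` {1..5}"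
      "\<forall>j\<in>{1..5}. {c, u j} \<in> E'" "\<forall>j\<in>{1..4}. {u j, u (Suc j)} \<in> E'"
    using assms(1) unfolding has_4fan_def by blast
  have "g c \<notin> g ` u ` {1..5}"
    using fan(1,3,4) inj_on_image_mem_iff[OF assms(2)] by blast
  then have "g c \<notin> (g \<circ> u) ` {1..5}" by (simp add: image_comp)
  moreover have "inj_on (g \<circ> u) {1..5}"
    using fan(2,3) assms(2) by (meson comp_inj_on inj_on_subset)
  moreover have "(g \<circ> u) ` {1..5} \<subseteq> V"
    using fan(3) assms(3) by (auto simp: image_comp[symmetric])
  ultimately show ?thesis
    unfolding has_4fan_def using fan assms(3) edges by (intro exI[of _ "g c"] exI[of _ "g \<circ> u"]) auto
qed

lemma total_colorable_pullback:
  assumes "total_colorable k V' E'" "inj_on f V" "f ` V \<subseteq> V'"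
    and edges: "\<And>e. e \<in> E \<Longrightarrow> e \<subseteq> V \<and> f ` e \<in> E'"
  shows "total_colorable k V E"
proof -
  obtain cv ce where col: "total_coloring k V' E' cv ce"
    using assms(1) unfolding total_colorable_def by blast
  have inj_edges: "inj_on (image f) E"
    using inj_on_image_Pow[OF assms(2)] edges by (meson PowI inj_on_subset subsetI)
  have "total_coloring k V E (cv \<circ> f) (ce \<circ> image f)"
    unfolding total_coloring_def
  proof (intro conjI ballI allI impI)
    show "(cv \<circ> f) a \<in> {1..k}" if "a \<in> V" for a
      using col that assms(3) unfolding total_coloring_def by auto
    show "(ce \<circ> image f) e \<in> {1..k}" if "e \<in> E" for e
      using col that edges unfolding total_coloring_def by auto
    show "(cv \<circ> f) x \<noteq> (cv \<circ> f) y" if "{x, y} \<in> E" "x \<noteq> y" for x y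
    proof -
      have "f x \<noteq> f y" using that edges assms(2) by (meson inj_on_contraD insert_subset)
      moreover have "{f x, f y} \<in> E'" using edges[OF that(1)] by simp
      ultimately show ?thesis using col unfolding total_coloring_def by simp
    qed
    show "(ce \<circ> image f) e1 \<noteq> (ce \<circ> image f) e2" if "e1 \<in> E" "e2 \<in> E" "e1 \<noteq> e2 \<and> e1 \<inter> e2 \<noteq> {}"
      for e1 e2
    proof -
      have "f ` e1 \<noteq> f ` e2" using that inj_edges by (meson inj_onD)
      moreover have "f ` e1 \<inter> f ` e2 \<noteq> {}" using that by blast
      ultimately show ?thesis using col that edges unfolding total_coloring_def by auto
    qed
    show "(cv \<circ> f) a \<noteq> (ce \<circ> image f) e" if "e \<in> E" "a \<in> e" for e a
      using col that edges unfolding total_coloring_def by auto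
  qed
  then show ?thesis unfolding total_colorable_def by blast
qed

lemma simple_graph_image:
  assumes "simple_graph V E" "inj_on f V"
  shows "simple_graph (f ` V) (image f ` E)"
  unfolding simple_graph_def
proof (intro conjI ballI)
  show "finite (f ` V)" using assms(1) unfolding simple_graph_def by simp
  fix e' assume "e' \<in> image f ` E"
  then obtain x y where "e' = {f x, f y}" "x \<noteq> y" "x \<in> V" "y \<in> V"
    using assms(1) unfolding simple_graph_def by auto
  moreover have "f x \<noteq> f y" using calculation(2-4) assms(2) by (meson inj_on_contraD)
  ultimately show "\<exists>x y. e' = {x, y} \<and> x \<noteq> y \<and> x \<in> f ` V \<and> y \<in> f ` V" by blast
qed

lemma deg_image:
  assumes "simple_graph V E" "inj_on f V" "a \<in> V"
  shows "deg (image f ` E) (f a) = deg E a"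
proof -
  have inj_edges: "inj_on (image f) E"
    using inj_on_image_Pow[OF assms(2)] simple_graph_edge_subset[OF assms(1)]
    by (meson PowI inj_on_subset subsetI)
  have "{e' \<in> image f ` E. f a \<in> e'} = image f ` {e \<in> E. a \<in> e}"
    using inj_on_image_mem_iff[OF assms(2,3)] simple_graph_edge_subset[OF assms(1)] by auto
  then show ?thesis
    unfolding deg_def using inj_edges by (simp add: card_image inj_on_subset)
qed

lemma plane_embedding_image:
  assumes G: "simple_graph V E" and left_inv: "\<And>a. a \<in> V \<Longrightarrow> g (f a) = a"
    and emb: "plane_embedding V E p \<gamma>"
  shows "plane_embedding (f ` V) (image f ` E) (p \<circ> g) (\<gamma> \<circ> image g)"
proof -
  from emb have inj_p: "inj_on p V"
    and arcs: "\<And>e. e \<in> E \<Longrightarrow> arc (\<gamma> e) \<and> {pathstart (\<gamma> e), pathfinish (\<gamma> e)} = p ` e"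
    and avoid: "\<And>e a. e \<in> E \<Longrightarrow> a \<in> V \<Longrightarrow> p a \<in> path_image (\<gamma> e) \<Longrightarrow> a \<in> e"
    and cross: "\<And>e1 e2. e1 \<in> E \<Longrightarrow> e2 \<in> E \<Longrightarrow> e1 \<noteq> e2 \<Longrightarrow>
        path_image (\<gamma> e1) \<inter> path_image (\<gamma> e2) \<subseteq> p ` (e1 \<inter> e2)"
    unfolding plane_embedding_def by simp_all
  have left_inv_edge: "g ` f ` e = e" if "e \<in> E" for e
    using simple_graph_edge_subset[OF G that] left_inv by force
  have arc: "(\<gamma> \<circ> image g) (f ` e) = \<gamma> e" if "e \<in> E" for e
    by (simp only: comp_apply left_inv_edge[OF that])
  have ends: "(p \<circ> g) ` f ` e = p ` e" if "e \<in> E" for e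
    by (simp only: image_comp[symmetric] left_inv_edge[OF that])
  have inj_f: "inj_on f V" using left_inv by (rule inj_on_inverseI)
  show ?thesis
    unfolding plane_embedding_def
  proof (intro conjI ballI impI)
    show "inj_on (p \<circ> g) (f ` V)"
      using inj_p left_inv by (auto intro!: inj_onI dest: inj_onD)
    fix e' assume "e' \<in> image f ` E"
    then obtain e where e: "e \<in> E" "e' = f ` e" by blast
    show "arc ((\<gamma> \<circ> image g) e')"
      unfolding e(2) arc[OF e(1)] using arcs[OF e(1)] ..
    show "{pathstart ((\<gamma> \<circ> image g) e'), pathfinish ((\<gamma> \<circ> image g) e')} = (p \<circ> g) ` e'"
      unfolding e(2) arc[OF e(1)] ends[OF e(1)] using arcs[OF e(1)] ..
    show "b \<in> e'" if "b \<in> f ` V" "(p \<circ> g) b \<in> path_image ((\<gamma> \<circ> image g) e')" for b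
      using that avoid[OF e(1)] left_inv unfolding e(2) arc[OF e(1)] by auto
    show "path_image ((\<gamma> \<circ> image g) e') \<inter> path_image ((\<gamma> \<circ> image g) e2')
        \<subseteq> (p \<circ> g) ` (e' \<inter> e2')"
      if e2': "e2' \<in> image f ` E" "e' \<noteq> e2'" for e2'
    proof -
      obtain e2 where e2: "e2 \<in> E" "e2' = f ` e2" using e2'(1) by blast
      have "e \<inter> e2 \<subseteq> V" using e(1) simple_graph_edge_subset[OF G] by blast
      then have "p ` (e \<inter> e2) = (p \<circ> g) ` (e' \<inter> e2')"
        unfolding e(2) e2(2) inj_on_image_Int[OF inj_f simple_graph_edge_subset[OF G e(1)]
            simple_graph_edge_subset[OF G e2(1)], symmetric]
        using left_inv by (force simp: image_comp[symmetric])
      moreover have "e \<noteq> e2" using e2'(2) e(2) e2(2) by blast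
      ultimately show ?thesis
        using cross[OF e(1) e2(1)] unfolding e(2) e2(2) arc[OF e(1)] arc[OF e2(1)] by simp
    qed
  qed
qed

text \<open>The minimality hypothesis only speaks about graphs on \<^typ>\<open>nat\<close>, so the edge-deleted
  graph is first relabeled injectively into \<^typ>\<open>nat\<close>.\<close>

lemma minimal_counterexample_edge_deleted_colorable:
  fixes V :: "'a set" and E :: "'a set set"
  assumes G: "simple_graph V E" and emb: "plane_embedding V E p \<gamma>"
    and dg: "\<forall>a\<in>V. deg E a \<le> d" and no_fan: "\<not> has_4fan V E"
    and minimal: "\<And>(VH :: nat set) EH. simple_graph VH EH \<Longrightarrow> planar VH EH \<Longrightarrow>
                     (\<forall>x\<in>VH. deg EH x \<le> d) \<Longrightarrow> \<not> has_4fan VH EH \<Longrightarrow>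
                     card VH + card EH < card V + card E \<Longrightarrow> total_colorable k VH EH"
    and e0: "e0 \<in> E"
  shows "total_colorable k V (E - {e0})"
proof -
  let ?E = "E - {e0}"
  have "finite V" using G unfolding simple_graph_def by simp
  then obtain f :: "'a \<Rightarrow> nat" where inj_f: "inj_on f V"
    using finite_imp_inj_to_nat_seg by blast
  let ?g = "inv_into V f"
  have G': "simple_graph V ?E" using G by (rule simple_graph_Diff)
  have left_inv: "?g (f a) = a" if "a \<in> V" for a using inj_f that by simp
  have "simple_graph (f ` V) (image f ` ?E)"
    using G' inj_f by (rule simple_graph_image)
  moreover have "planar (f ` V) (image f ` ?E)"
    unfolding planar_def
    using plane_embedding_image[of V ?E ?g f, OF G' left_inv plane_embedding_Diff[OF emb]]
    by blast
  moreover have "\<forall>x\<in>f ` V. deg (image f ` ?E) x \<le> d"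
    using deg_image[OF G' inj_f] deg_Diff_le[OF simple_graph_finite_edges[OF G]] dg
    by (metis image_iff order_trans)
  moreover have "\<not> has_4fan (f ` V) (image f ` ?E)"
  proof
    assume fan: "has_4fan (f ` V) (image f ` ?E)"
    have "{?g a, ?g b} \<in> E" if "{a, b} \<in> image f ` ?E" for a b
    proof -
      obtain e where e: "e \<in> ?E" "{a, b} = f ` e" using \<open>{a, b} \<in> image f ` ?E\<close> by blast
      then have "{?g a, ?g b} = ?g ` f ` e" by (metis image_empty image_insert)
      also have "\<dots> = e" using inj_f simple_graph_edge_subset[OF G' e(1)] by simp
      finally show ?thesis using e(1) by simp
    qed
    then have "has_4fan V E"
      using inj_on_inv_into[of "f ` V" f V] inj_f by (intro has_4fan_hom[OF fan]) auto
    with no_fan show False ..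
  qed
  moreover have "card (f ` V) + card (image f ` ?E) < card V + card E"
  proof -
    have "inj_on (image f) ?E"
      using inj_on_image_Pow[OF inj_f] simple_graph_edge_subset[OF G']
      by (meson PowI inj_on_subset subsetI)
    then have "card (image f ` ?E) = card ?E" by (rule card_image)
    also have "\<dots> < card E" using simple_graph_finite_edges[OF G] e0 by (rule card_Diff1_less)
    finally show ?thesis using card_image[OF inj_f] by simp
  qed
  ultimately have "total_colorable k (f ` V) (image f ` ?E)" by (rule minimal)
  then show ?thesis
    by (rule total_colorable_pullback[OF _ inj_f]) (use simple_graph_edge_subset[OF G'] in auto)
qed


section \<open>Partial total colorings\<close>

definition partial_total_coloring ::
  "nat \<Rightarrow> 'a set \<Rightarrow> 'a set set \<Rightarrow> ('a \<Rightarrow> nat) \<Rightarrow> ('a set \<Rightarrow> nat) \<Rightarrow> 'a set \<Rightarrow> bool" where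
  "partial_total_coloring k V E cv ce S \<longleftrightarrow>
     (\<forall>a\<in>V - S. cv a \<in> {1..k}) \<and> (\<forall>e\<in>E. ce e \<in> {1..k}) \<and>
     (\<forall>x y. {x, y} \<in> E \<longrightarrow> x \<noteq> y \<longrightarrow> x \<notin> S \<longrightarrow> y \<notin> S \<longrightarrow> cv x \<noteq> cv y) \<and>
     (\<forall>e1\<in>E. \<forall>e2\<in>E. e1 \<noteq> e2 \<and> e1 \<inter> e2 \<noteq> {} \<longrightarrow> ce e1 \<noteq> ce e2) \<and>
     (\<forall>e\<in>E. \<forall>a\<in>e. a \<notin> S \<longrightarrow> cv a \<noteq> ce e)"

lemma partial_total_coloringD:
  assumes "partial_total_coloring k V E cv ce S"
  shows partial_total_coloring_vertex_range: "\<And>a. a \<in> V \<Longrightarrow> a \<notin> S \<Longrightarrow> cv a \<in> {1..k}"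
    and partial_total_coloring_edge_range: "\<And>e. e \<in> E \<Longrightarrow> ce e \<in> {1..k}"
    and partial_total_coloring_adjacent_vertices:
      "\<And>x y. {x, y} \<in> E \<Longrightarrow> x \<noteq> y \<Longrightarrow> x \<notin> S \<Longrightarrow> y \<notin> S \<Longrightarrow> cv x \<noteq> cv y"
    and partial_total_coloring_adjacent_edges:
      "\<And>e1 e2. e1 \<in> E \<Longrightarrow> e2 \<in> E \<Longrightarrow> e1 \<noteq> e2 \<Longrightarrow> e1 \<inter> e2 \<noteq> {} \<Longrightarrow> ce e1 \<noteq> ce e2"
    and partial_total_coloring_incident: "\<And>e a. e \<in> E \<Longrightarrow> a \<in> e \<Longrightarrow> a \<notin> S \<Longrightarrow> cv a \<noteq> ce e"
  using assms unfolding partial_total_coloring_def by simp_all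

lemma partial_total_coloring_empty:
  "partial_total_coloring k V E cv ce {} \<longleftrightarrow> total_coloring k V E cv ce"
  unfolding partial_total_coloring_def total_coloring_def by simp

lemma total_coloring_imp_partial:
  "total_coloring k V E cv ce \<Longrightarrow> partial_total_coloring k V E cv ce S"
  unfolding partial_total_coloring_def total_coloring_def by simp

lemma partial_total_coloring_mono:
  "partial_total_coloring k V E cv ce S \<Longrightarrow> E' \<subseteq> E \<Longrightarrow> S \<subseteq> S' \<Longrightarrow>
    partial_total_coloring k V E' cv ce S'"
  unfolding partial_total_coloring_def by (meson Diff_iff subsetD)

lemma partial_total_coloring_update_edge:
  assumes col: "partial_total_coloring k V (E - {e0}) cv ce S" and c: "c \<in> {1..k}"
    and edges: "\<And>e. e \<in> E \<Longrightarrow> e \<noteq> e0 \<Longrightarrow> e \<inter> e0 \<noteq> {} \<Longrightarrow> ce e \<noteq> c"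
    and ends: "\<And>a. a \<in> e0 \<Longrightarrow> a \<notin> S \<Longrightarrow> cv a \<noteq> c"
    and adj: "\<And>x y. e0 = {x, y} \<Longrightarrow> x \<noteq> y \<Longrightarrow> x \<notin> S \<Longrightarrow> y \<notin> S \<Longrightarrow> cv x \<noteq> cv y"
  shows "partial_total_coloring k V E cv (ce(e0 := c)) S"
  unfolding partial_total_coloring_def
proof (intro conjI ballI allI impI)
  show "cv a \<in> {1..k}" if "a \<in> V - S" for a
    using partial_total_coloring_vertex_range[OF col] that by blast
  show "(ce(e0 := c)) e \<in> {1..k}" if "e \<in> E" for e
    using partial_total_coloring_edge_range[OF col] that c by simp
  show "cv x \<noteq> cv y" if "{x, y} \<in> E" "x \<noteq> y" "x \<notin> S" "y \<notin> S" for x y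
    using partial_total_coloring_adjacent_vertices[OF col] that adj by (cases "{x, y} = e0") blast+
  show "(ce(e0 := c)) e1 \<noteq> (ce(e0 := c)) e2"
    if "e1 \<in> E" "e2 \<in> E" "e1 \<noteq> e2 \<and> e1 \<inter> e2 \<noteq> {}" for e1 e2
    using partial_total_coloring_adjacent_edges[OF col] that edges[of e1] edges[of e2]
    by (simp add: Int_commute) blast
  show "cv a \<noteq> (ce(e0 := c)) e" if "e \<in> E" "a \<in> e" "a \<notin> S" for e a
    using partial_total_coloring_incident[OF col] that ends by (cases "e = e0") simp_all
qed

lemma partial_total_coloring_insert_edge:
  assumes col: "partial_total_coloring k V (E - {{a, b}}) cv ce S"
    and "a \<in> S \<or> b \<in> S" "c \<in> {1..k}"
    and "a \<notin> S \<Longrightarrow> cv a \<noteq> c" "b \<notin> S \<Longrightarrow> cv b \<noteq> c"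
    and edges: "\<And>e. e \<in> E \<Longrightarrow> e \<noteq> {a, b} \<Longrightarrow> a \<in> e \<or> b \<in> e \<Longrightarrow> ce e \<noteq> c"
  shows "partial_total_coloring k V E cv (ce({a, b} := c)) S"
  using col \<open>c \<in> {1..k}\<close>
proof (rule partial_total_coloring_update_edge)
  show "ce e \<noteq> c" if "e \<in> E" "e \<noteq> {a, b}" "e \<inter> {a, b} \<noteq> {}" for e
    using edges that by blast
qed (use assms in \<open>auto simp: doubleton_eq_iff\<close>)

lemma partial_total_coloring_recolor_edge:
  assumes col: "partial_total_coloring k V E cv ce S" and "{a, b} \<in> E" "c \<in> {1..k}"
    and "a \<notin> S \<Longrightarrow> cv a \<noteq> c" "b \<notin> S \<Longrightarrow> cv b \<noteq> c"
    and edges: "\<And>e. e \<in> E \<Longrightarrow> e \<noteq> {a, b} \<Longrightarrow> a \<in> e \<or> b \<in> e \<Longrightarrow> ce e \<noteq> c"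
  shows "partial_total_coloring k V E cv (ce({a, b} := c)) S"
proof (rule partial_total_coloring_update_edge)
  show "partial_total_coloring k V (E - {{a, b}}) cv ce S"
    using col by (rule partial_total_coloring_mono) auto
  show "ce e \<noteq> c" if "e \<in> E" "e \<noteq> {a, b}" "e \<inter> {a, b} \<noteq> {}" for e
    using edges that by blast
  show "cv x \<noteq> cv y" if "{a, b} = {x, y}" "x \<noteq> y" "x \<notin> S" "y \<notin> S" for x y
    using partial_total_coloring_adjacent_vertices[OF col] \<open>{a, b} \<in> E\<close> that by auto
qed (use assms in auto)

lemma ex_color_notin: "finite F \<Longrightarrow> card F < k \<Longrightarrow> \<exists>c\<in>{1..k::nat}. c \<notin> F"
proof (rule ccontr)
  assume "finite F" "card F < k" "\<not> (\<exists>c\<in>{1..k}. c \<notin> F)"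
  then have "card {1..k} \<le> card F" by (intro card_mono) auto
  with \<open>card F < k\<close> show False by simp
qed

lemma partial_total_coloring_color_vertex:
  assumes col: "partial_total_coloring k V E cv ce S" and "finite E"
    and small: "2 * deg E a < k"
  shows "\<exists>c. partial_total_coloring k V E (cv(a := c)) ce (S - {a})"
proof -
  let ?Ea = "{e\<in>E. a \<in> e}"
  let ?other_end = "\<lambda>e. the_elem (e - {a})"
  let ?F = "ce ` ?Ea \<union> (cv \<circ> ?other_end) ` ?Ea"
  have "finite ?Ea" using \<open>finite E\<close> by simp
  then have "card ?F \<le> card ?Ea + card ?Ea"
    by (meson add_mono card_Un_le card_image_le order_trans)
  also have "\<dots> < k" using small unfolding deg_def by simp
  finally have "card ?F < k" .
  moreover have "finite ?F" using \<open>finite ?Ea\<close> by blast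
  ultimately have "\<exists>c\<in>{1..k}. c \<notin> ?F" by (rule ex_color_notin[rotated])
  then obtain c where c: "c \<in> {1..k}" "c \<notin> ?F" ..
  have nbr: "cv y \<noteq> c" if "{a, y} \<in> E" "y \<noteq> a" for y
  proof -
    have "?other_end {a, y} = y" using that by auto
    then have "cv y \<in> ?F" using that by force
    with c show ?thesis by auto
  qed
  have "partial_total_coloring k V E (cv(a := c)) ce (S - {a})"
    unfolding partial_total_coloring_def
  proof (intro conjI ballI allI impI)
    show "(cv(a := c)) b \<in> {1..k}" if "b \<in> V - (S - {a})" for b
      using partial_total_coloring_vertex_range[OF col, of b] that c by auto
    show "ce e \<in> {1..k}" if "e \<in> E" for e
      using partial_total_coloring_edge_range[OF col] that .
    show "ce e1 \<noteq> ce e2" if "e1 \<in> E" "e2 \<in> E" "e1 \<noteq> e2 \<and> e1 \<inter> e2 \<noteq> {}" for e1 e2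
      using partial_total_coloring_adjacent_edges[OF col] that by blast
    show "(cv(a := c)) b \<noteq> ce e" if "e \<in> E" "b \<in> e" "b \<notin> S - {a}" for e b
      using partial_total_coloring_incident[OF col, of e b] that c by (cases "b = a") auto
    show "(cv(a := c)) x \<noteq> (cv(a := c)) y"
      if "{x, y} \<in> E" "x \<noteq> y" "x \<notin> S - {a}" "y \<notin> S - {a}" for x y
      using partial_total_coloring_adjacent_vertices[OF col, of x y] that nbr[of y] nbr[of x]
      by (auto simp: insert_commute)
  qed
  then show ?thesis by blast
qed

lemma partial_total_coloring_completes:
  assumes "finite S" "partial_total_coloring k V E cv ce S" "finite E"
    and "\<forall>a\<in>S. 2 * deg E a < k"
  shows "total_colorable k V E"
  using assms
proof (induction S arbitrary: cv rule: finite_induct)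
  case empty
  then show ?case
    unfolding total_colorable_def partial_total_coloring_empty[symmetric] by blast
next
  case (insert a S)
  then obtain c where "partial_total_coloring k V E (cv(a := c)) ce S"
    using partial_total_coloring_color_vertex[of k V E cv ce "insert a S" a] by auto
  then show ?case using insert.IH insert.prems(2,3) by simp
qed

lemma total_colorable_of_edge_between_small_vertices:
  assumes "total_colorable k V (E - {{u, w}})" "{u, w} \<in> E" "finite E"
    and "2 * deg E u < k" "2 * deg E w < k"
  shows "total_colorable k V E"
proof -
  obtain cv ce where "total_coloring k V (E - {{u, w}}) cv ce"
    using assms(1) unfolding total_colorable_def by blast
  then have col: "partial_total_coloring k V (E - {{u, w}}) cv ce {u, w}"
    by (rule total_coloring_imp_partial)
  let ?F = "ce ` ({e \<in> E. u \<in> e} \<union> {e \<in> E. w \<in> e})"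
  have "card ?F \<le> card ({e \<in> E. u \<in> e} \<union> {e \<in> E. w \<in> e})"
    using \<open>finite E\<close> by (intro card_image_le) simp
  also have "\<dots> \<le> card {e \<in> E. u \<in> e} + card {e \<in> E. w \<in> e}"
    by (rule card_Un_le)
  also have "\<dots> < k" using assms(4,5) unfolding deg_def by simp
  finally have "\<exists>c\<in>{1..k}. c \<notin> ?F" using \<open>finite E\<close> by (intro ex_color_notin) auto
  then obtain c where c: "c \<in> {1..k}" "c \<notin> ?F" ..
  have "partial_total_coloring k V E cv (ce({u, w} := c)) {u, w}"
    using col by (rule partial_total_coloring_insert_edge) (use c in auto)
  then show ?thesis
    by (rule partial_total_coloring_completes[rotated]) (use assms in auto)
qed


section \<open>Recoloring around a degree-7 vertex\<close>

locale degree7_triangle_coloring =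
  fixes V :: "'a set" and E :: "'a set set" and cv :: "'a \<Rightarrow> nat" and ce :: "'a set \<Rightarrow> nat"
    and v u w x :: 'a
  assumes col: "partial_total_coloring 9 V (E - {{v, u}}) cv ce {u, w}"
    and finite_edges: "finite E"
    and deg_v: "deg E v = 7" and deg_u: "deg E u = 3" and deg_w: "deg E w = 3"
    and edges: "{v, u} \<in> E" "{u, x} \<in> E" "{v, x} \<in> E" "{v, w} \<in> E"
    and distinct: "v \<noteq> u" "v \<noteq> w" "v \<noteq> x" "u \<noteq> w" "u \<noteq> x" "w \<noteq> x"
begin

definition colors_v :: "nat set" where
  "colors_v = insert (cv v) (ce ` {e \<in> E - {{v, u}}. v \<in> e})"

definition colors_u :: "nat set" where
  "colors_u = ce ` {e \<in> E - {{v, u}}. u \<in> e}"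

definition colors_w :: "nat set" where
  "colors_w = ce ` {e \<in> E - {{v, w}}. w \<in> e}"

lemma remaining_edges: "{u, x} \<in> E - {{v, u}}" "{v, x} \<in> E - {{v, u}}" "{v, w} \<in> E - {{v, u}}"
  using edges distinct by (auto simp: doubleton_eq_iff)

lemma distinct_edges: "{v, x} \<noteq> {v, w}" "{u, x} \<noteq> {v, w}" "{u, x} \<noteq> {v, x}"
  using distinct by (auto simp: doubleton_eq_iff)

lemma edge_color_range: "e \<in> E - {{v, u}} \<Longrightarrow> ce e \<in> {1..9}"
  by (rule partial_total_coloring_edge_range[OF col])

lemma edge_colors_distinct:
  "e1 \<in> E - {{v, u}} \<Longrightarrow> e2 \<in> E - {{v, u}} \<Longrightarrow> e1 \<noteq> e2 \<Longrightarrow> a \<in> e1 \<Longrightarrow> a \<in> e2 \<Longrightarrow>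
    ce e1 \<noteq> ce e2"
  using partial_total_coloring_adjacent_edges[OF col] by blast

lemma vertex_edge_colors_distinct:
  "e \<in> E - {{v, u}} \<Longrightarrow> a \<in> e \<Longrightarrow> a \<noteq> u \<Longrightarrow> a \<noteq> w \<Longrightarrow> cv a \<noteq> ce e"
  using partial_total_coloring_incident[OF col] by blast

lemma in_colors_v: "cv v \<in> colors_v" "e \<in> E - {{v, u}} \<Longrightarrow> v \<in> e \<Longrightarrow> ce e \<in> colors_v"
  unfolding colors_v_def by auto

lemma in_colors_u: "e \<in> E - {{v, u}} \<Longrightarrow> u \<in> e \<Longrightarrow> ce e \<in> colors_u"
  unfolding colors_u_def by auto

lemma in_colors_w: "e \<in> E - {{v, w}} \<Longrightarrow> w \<in> e \<Longrightarrow> ce e \<in> colors_w"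
  unfolding colors_w_def by auto

lemma finite_colors: "finite colors_v" "finite colors_u" "finite colors_w"
  unfolding colors_v_def colors_u_def colors_w_def using finite_edges by auto

lemma card_colors_at:
  assumes "e0 \<in> E" "a \<in> e0"
  shows "card (ce ` {e \<in> E - {e0}. a \<in> e}) \<le> deg E a - 1"
proof -
  have "card (ce ` {e \<in> E - {e0}. a \<in> e}) \<le> deg (E - {e0}) a"
    unfolding deg_def using finite_edges by (intro card_image_le) simp
  also have "\<dots> = deg E a - 1" using deg_Diff_incident[OF finite_edges assms] .
  finally show ?thesis .
qed

lemma card_colors: "card colors_v \<le> 7" "card colors_u \<le> 2" "card colors_w \<le> 2"
proof -
  have "card colors_v \<le> Suc (card (ce ` {e \<in> E - {{v, u}}. v \<in> e}))"
    unfolding colors_v_def using finite_edges by (simp add: card_insert_if)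
  then show "card colors_v \<le> 7" using card_colors_at[OF edges(1), of v] deg_v by simp
  show "card colors_u \<le> 2"
    unfolding colors_u_def using card_colors_at[OF edges(1), of u] deg_u by simp
  show "card colors_w \<le> 2"
    unfolding colors_w_def using card_colors_at[OF edges(4), of w] deg_w by simp
qed

lemma extend_by_free_color:
  assumes "c \<in> {1..9}" "c \<notin> colors_v" "c \<notin> colors_u"
  shows "partial_total_coloring 9 V E cv (ce({v, u} := c)) {u, w}"
proof (rule partial_total_coloring_insert_edge)
  show "partial_total_coloring 9 V (E - {{v, u}}) cv ce {u, w}" by (rule col)
  show "cv v \<noteq> c" using in_colors_v(1) assms(2) by blast
  show "ce e \<noteq> c" if "e \<in> E" "e \<noteq> {v, u}" "v \<in> e \<or> u \<in> e" for e
    using that in_colors_v(2)[of e] in_colors_u[of e] assms(2,3) by blast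
qed (use assms(1) in simp_all)

lemma extend_by_shifting_vw:
  assumes disjoint: "colors_v \<inter> colors_u = {}" and g: "g \<in> colors_u" "g \<notin> colors_w"
  shows "partial_total_coloring 9 V E cv (ce({v, w} := g, {v, u} := ce {v, w})) {u, w}"
proof (rule partial_total_coloring_insert_edge)
  have g_range: "g \<in> {1..9}" using g(1) edge_color_range unfolding colors_u_def by blast
  have "g \<notin> colors_v" using disjoint g(1) by blast
  show "partial_total_coloring 9 V (E - {{v, u}}) cv (ce({v, w} := g)) {u, w}"
  proof (rule partial_total_coloring_recolor_edge[OF col remaining_edges(3) g_range])
    show "cv v \<noteq> g" using in_colors_v(1) \<open>g \<notin> colors_v\<close> by blast
    show "ce e \<noteq> g" if "e \<in> E - {{v, u}}" "e \<noteq> {v, w}" "v \<in> e \<or> w \<in> e" for e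
      using that in_colors_v(2)[of e] in_colors_w[of e] \<open>g \<notin> colors_v\<close> g(2) by blast
  qed simp
  show "cv v \<noteq> (ce {v, w})"
    using vertex_edge_colors_distinct[OF remaining_edges(3)] distinct by simp
  show "(ce({v, w} := g)) e \<noteq> ce {v, w}" if "e \<in> E" "e \<noteq> {v, u}" "v \<in> e \<or> u \<in> e" for e
  proof (cases "e = {v, w}")
    case True
    then show ?thesis using g(1) in_colors_v(2)[OF remaining_edges(3)] disjoint by auto
  next
    case False
    have "ce e \<noteq> ce {v, w}"
      using that(3) False edge_colors_distinct[of e "{v, w}" v] in_colors_u[of e]
        in_colors_v(2)[OF remaining_edges(3)] disjoint that(1,2) remaining_edges(3) by auto
    with False show ?thesis by simp
  qed
qed (use edge_color_range[OF remaining_edges(3)] in simp_all)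

definition swapped :: "'a set \<Rightarrow> nat" where
  "swapped = ce({v, x} := ce {u, x}, {u, x} := ce {v, x}, {v, w} := ce {v, x})"

lemma swapped_coloring:
  assumes disjoint: "colors_v \<inter> colors_u = {}" and same: "colors_w = colors_u"
  shows "partial_total_coloring 9 V (E - {{v, u}}) cv swapped {u, w}"
proof -
  let ?\<alpha> = "ce {u, x}" and ?\<phi> = "ce {v, x}"
  have \<alpha>: "?\<alpha> \<in> colors_u" "?\<alpha> \<notin> colors_v" "?\<alpha> \<in> {1..9}"
    using in_colors_u[OF remaining_edges(1)] disjoint edge_color_range[OF remaining_edges(1)] by auto
  have \<phi>: "?\<phi> \<in> colors_v" "?\<phi> \<notin> colors_u" "?\<phi> \<in> {1..9}"
    using in_colors_v(2)[OF remaining_edges(2)] disjoint edge_color_range[OF remaining_edges(2)] by auto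
  have "partial_total_coloring 9 V (E - {{v, u}} - {{u, x}}) cv (ce({v, x} := ?\<alpha>)) {u, w}"
  proof (rule partial_total_coloring_recolor_edge[OF _ _ \<alpha>(3)])
    show "partial_total_coloring 9 V (E - {{v, u}} - {{u, x}}) cv ce {u, w}"
      using col by (rule partial_total_coloring_mono) auto
    show "{v, x} \<in> E - {{v, u}} - {{u, x}}" using remaining_edges(2) distinct_edges(3) by simp
    show "cv v \<noteq> ?\<alpha>" using in_colors_v(1) \<alpha>(2) by auto
    show "cv x \<noteq> ?\<alpha>" using vertex_edge_colors_distinct[OF remaining_edges(1)] distinct by simp
    show "ce e \<noteq> ?\<alpha>" if "e \<in> E - {{v, u}} - {{u, x}}" "e \<noteq> {v, x}" "v \<in> e \<or> x \<in> e" for e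
      using that in_colors_v(2)[of e] \<alpha>(2) edge_colors_distinct[OF _ remaining_edges(1), of e x]
      by auto
  qed
  then have "partial_total_coloring 9 V (E - {{v, u}}) cv (ce({v, x} := ?\<alpha>, {u, x} := ?\<phi>)) {u, w}"
  proof (rule partial_total_coloring_insert_edge)
    show "cv x \<noteq> ?\<phi>" using vertex_edge_colors_distinct[OF remaining_edges(2)] distinct by simp
    show "(ce({v, x} := ?\<alpha>)) e \<noteq> ?\<phi>"
      if e: "e \<in> E - {{v, u}}" "e \<noteq> {u, x}" "u \<in> e \<or> x \<in> e" for e
    proof (cases "e = {v, x}")
      case True
      then show ?thesis using \<alpha>(1) \<phi>(2) by auto
    next
      case False
      have "ce e \<noteq> ?\<phi>"
        using e(3) \<phi>(2) in_colors_u[OF e(1)] edge_colors_distinct[OF e(1) remaining_edges(2) False, of x]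
        by auto
      with False show ?thesis by simp
    qed
  qed (use \<phi>(3) in simp_all)
  then show ?thesis
    unfolding swapped_def
  proof (rule partial_total_coloring_recolor_edge[OF _ remaining_edges(3) \<phi>(3)])
    show "cv v \<noteq> ?\<phi>" using vertex_edge_colors_distinct[OF remaining_edges(2)] distinct by simp
    show "(ce({v, x} := ?\<alpha>, {u, x} := ?\<phi>)) e \<noteq> ?\<phi>"
      if e: "e \<in> E - {{v, u}}" "e \<noteq> {v, w}" "v \<in> e \<or> w \<in> e" for e
    proof -
      consider "e = {v, x}" | "e = {u, x}" | "e \<noteq> {v, x}" "e \<noteq> {u, x}" by blast
      then show ?thesis
      proof cases
        case 1
        then show ?thesis using \<alpha>(1) \<phi>(2) distinct_edges(3) by auto
      next
        case 2
        then show ?thesis using e(3) distinct by auto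
      next
        case 3
        have "e \<in> E - {{v, w}}" using e(1,2) by blast
        then have "ce e \<noteq> ?\<phi>"
          using e(3) \<phi>(2) same in_colors_w[of e] edge_colors_distinct[OF e(1) remaining_edges(2) 3(1), of v]
          by auto
        with 3 show ?thesis by simp
      qed
    qed
  qed simp
qed

lemma extend_by_swapping:
  assumes disjoint: "colors_v \<inter> colors_u = {}" and same: "colors_w = colors_u"
  shows "partial_total_coloring 9 V E cv (swapped({v, u} := ce {v, w})) {u, w}"
proof (rule partial_total_coloring_insert_edge[OF swapped_coloring[OF assms]])
  let ?\<epsilon> = "ce {v, w}"
  have \<epsilon>: "?\<epsilon> \<in> colors_v" "?\<epsilon> \<notin> colors_u"
    using in_colors_v(2)[OF remaining_edges(3)] disjoint by auto
  show "cv v \<noteq> ?\<epsilon>"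
    using vertex_edge_colors_distinct[OF remaining_edges(3)] distinct by simp
  show "swapped e \<noteq> ?\<epsilon>" if e: "e \<in> E" "e \<noteq> {v, u}" "v \<in> e \<or> u \<in> e" for e
  proof -
    have e1: "e \<in> E - {{v, u}}" using e(1,2) by blast
    consider "e = {v, w}" | "e = {u, x}" | "e = {v, x}"
      | "e \<noteq> {v, w}" "e \<noteq> {u, x}" "e \<noteq> {v, x}" by blast
    then show ?thesis
    proof cases
      case 1
      then show ?thesis unfolding swapped_def
        using edge_colors_distinct[OF remaining_edges(2,3) distinct_edges(1), of v] by simp
    next
      case 2
      then show ?thesis unfolding swapped_def using distinct_edges(2)
        edge_colors_distinct[OF remaining_edges(2,3) distinct_edges(1), of v] by simp
    next
      case 3
      then show ?thesis unfolding swapped_def using distinct_edges(1,3) \<epsilon>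
        in_colors_u[OF remaining_edges(1)] by auto
    next
      case 4
      then have "swapped e = ce e" unfolding swapped_def by simp
      moreover have "ce e \<noteq> ?\<epsilon>"
        using e(3) \<epsilon> in_colors_u[OF e1] edge_colors_distinct[OF e1 remaining_edges(3) 4(1), of v]
        by auto
      ultimately show ?thesis by simp
    qed
  qed
qed (use edge_color_range[OF remaining_edges(3)] in simp_all)

lemma coloring_extends: "\<exists>ce'. partial_total_coloring 9 V E cv ce' {u, w}"
proof (cases "\<exists>c\<in>{1..9}. c \<notin> colors_v \<union> colors_u")
  case True
  then show ?thesis using extend_by_free_color by blast
next
  case False
  then have "card {1..9::nat} \<le> card (colors_v \<union> colors_u)"
    using finite_colors by (intro card_mono) auto
  moreover have "card (colors_v \<union> colors_u) + card (colors_v \<inter> colors_u) =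
      card colors_v + card colors_u"
    using finite_colors by (intro card_Un_Int[symmetric])
  ultimately have "card (colors_v \<inter> colors_u) = 0" and card_u: "card colors_u = 2"
    using card_colors by auto
  then have disjoint: "colors_v \<inter> colors_u = {}" using finite_colors by simp
  show ?thesis
  proof (cases "colors_u \<subseteq> colors_w")
    case True
    have "card colors_w = card colors_u"
      using card_mono[OF finite_colors(3) True] card_u card_colors(3) by simp
    then have "colors_w = colors_u" using card_subset_eq[OF finite_colors(3) True] by simp
    then show ?thesis using extend_by_swapping[OF disjoint] by blast
  next
    case False
    then obtain g where "g \<in> colors_u" "g \<notin> colors_w" by blast
    then show ?thesis using extend_by_shifting_vw[OF disjoint] by blast
  qed
qed

end

lemma total_colorable_of_degree7_triangle:
  assumes "finite E" and deleted: "\<And>e. e \<in> E \<Longrightarrow> total_colorable 9 V (E - {e})"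
    and "deg E v = 7" "deg E u = 3" "deg E w = 3"
    and edges: "{v, u} \<in> E" "{u, x} \<in> E" "{v, x} \<in> E" "{v, w} \<in> E"
    and "v \<noteq> u" "v \<noteq> w" "v \<noteq> x" "u \<noteq> w" "u \<noteq> x"
  shows "total_colorable 9 V E"
proof (cases "{u, w} \<in> E")
  case True
  then show ?thesis
    using total_colorable_of_edge_between_small_vertices[OF deleted[OF True] True] assms(1,4,5)
    by simp
next
  case False
  then have "w \<noteq> x" using edges(2) by auto
  obtain cv ce where "total_coloring 9 V (E - {{v, u}}) cv ce"
    using deleted[OF edges(1)] unfolding total_colorable_def by blast
  then have "partial_total_coloring 9 V (E - {{v, u}}) cv ce {u, w}"
    by (rule total_coloring_imp_partial)
  then interpret degree7_triangle_coloring V E cv ce v u w x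
    using assms \<open>w \<noteq> x\<close> by unfold_locales auto
  obtain ce' where "partial_total_coloring 9 V E cv ce' {u, w}"
    using coloring_extends by blast
  then show ?thesis
    by (rule partial_total_coloring_completes[rotated]) (use assms(1,4,5) in simp_all)
qed

theorem lemma2p5:
  fixes V :: "'a set" and E :: "'a set set"
    and p :: "'a \<Rightarrow> complex" and \<gamma> :: "'a set \<Rightarrow> real \<Rightarrow> complex"
    and v u :: 'a
  assumes G: "simple_graph V E"
    and emb: "plane_embedding V E p \<gamma>"
    and maxdeg: "max_degree V E = 8"
    and no_fan: "\<not> has_4fan V E"
    and not_col: "\<not> total_colorable 9 V E"
    and minimal: "\<And>(VH :: nat set) EH. simple_graph VH EH \<Longrightarrow> planar VH EH \<Longrightarrow>
                     (\<forall>x\<in>VH. deg EH x \<le> 8) \<Longrightarrow> \<not> has_4fan VH EH \<Longrightarrow>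
                     card VH + card EH < card V + card E \<Longrightarrow> total_colorable 9 VH EH"
    and v: "v \<in> V" "deg E v = 7"
    and u: "u \<in> V" "deg E u = 3" "edge_on_3face V E p \<gamma> v u"
  shows "\<not> (\<exists>w\<in>V. w \<noteq> u \<and> deg E w = 3 \<and> edge_on_3face V E p \<gamma> v w)"
proof
  assume "\<exists>w\<in>V. w \<noteq> u \<and> deg E w = 3 \<and> edge_on_3face V E p \<gamma> v w"
  then obtain w where w: "w \<noteq> u" "deg E w = 3" "{v, w} \<in> E" "v \<noteq> w"
    unfolding edge_on_3face_def by blast
  obtain x where x: "v \<noteq> u" "{v, u} \<in> E" "{u, x} \<in> E" "{v, x} \<in> E" "x \<noteq> v" "x \<noteq> u"
    using u(3) unfolding edge_on_3face_def by blast
  have "\<forall>a\<in>V. deg E a \<le> 8"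
    using deg_le_max_degree maxdeg G unfolding simple_graph_def by metis
  then have deleted: "total_colorable 9 V (E - {e})" if "e \<in> E" for e
    using minimal_counterexample_edge_deleted_colorable[OF G emb _ no_fan minimal that] by blast
  have "total_colorable 9 V E"
    by (rule total_colorable_of_degree7_triangle[OF simple_graph_finite_edges[OF G] deleted
          v(2) u(2) w(2) x(2-4) w(3) x(1) w(4) x(5)[symmetric] w(1)[symmetric] x(6)[symmetric]])
  with not_col show False ..
qed

end
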